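(* Let $\alpha\in\{1/2,1\}$, $\beta\in(0,1]$, $\rho\in(0,1)$ and $\tilde\rho=\beta\rho$. The function $\Lambda\mapsto\mathbf M(\Lambda;\rho,\tilde\rho,\alpha)$ on $[0,\gamma_+]$, where $\gamma_+=\bigl(1+\sqrt{(\tilde\rho-\rho\tilde\rho)/(\rho-\rho\tilde\rho)}\bigr)^2$, is convex and attains its minimum at a unique point.
   Context: For $\gamma>0$, $\gamma_\pm=(1\pm\sqrt\gamma)^2$, $p_\gamma(t)=\frac{1}{2\pi\gamma t}\sqrt{(\gamma_+-t)(t-\gamma_-)}\mathbf 1_{[\gamma_-,\gamma_+]}(t)$ (Marčenko–Pastur density), $P_\gamma(x;k)=\int_x^{\gamma_+}t^kp_\gamma(t)dt$, and $\mathbf M(\Lambda;\rho,\tilde\rho,\alpha)=\rho+\tilde\rho-\rho\tilde\rho+(1-\tilde\rho)[\rho\Lambda^2+\alpha(1-\rho)(P_\gamma(\Lambda^2;1)-2\Lambda P_\gamma(\Lambda^2;\frac12)+\Lambda^2P_\gamma(\Lambda^2;0))]$ with $\gamma=(\tilde\rho-\rho\tilde\rho)/(\rho-\rho\tilde\rho)$. *)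

theory Defs
  imports "HOL-Analysis.Analysis"
begin

definition gamma_plus :: "real \<Rightarrow> real" where
  "gamma_plus \<gamma> = (1 + sqrt \<gamma>)\<^sup>2"

definition gamma_minus :: "real \<Rightarrow> real" where
  "gamma_minus \<gamma> = (1 - sqrt \<gamma>)\<^sup>2"

definition mp_density :: "real \<Rightarrow> real \<Rightarrow> real" where
  "mp_density \<gamma> t =
     (if gamma_minus \<gamma> \<le> t \<and> t \<le> gamma_plus \<gamma>
      then sqrt ((gamma_plus \<gamma> - t) * (t - gamma_minus \<gamma>)) / (2 * pi * \<gamma> * t)
      else 0)"

definition mp_tail :: "real \<Rightarrow> real \<Rightarrow> real \<Rightarrow> real" where
  "mp_tail \<gamma> x k = (LINT t:{x..gamma_plus \<gamma>}|lborel. t powr k * mp_density \<gamma> t)"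

definition mp_gamma :: "real \<Rightarrow> real \<Rightarrow> real" where
  "mp_gamma \<rho> \<rho>t = (\<rho>t - \<rho> * \<rho>t) / (\<rho> - \<rho> * \<rho>t)"

definition MM :: "real \<Rightarrow> real \<Rightarrow> real \<Rightarrow> real \<Rightarrow> real" where
  "MM \<Lambda> \<rho> \<rho>t \<alpha> =
     (let \<gamma> = mp_gamma \<rho> \<rho>t in
      \<rho> + \<rho>t - \<rho> * \<rho>t + (1 - \<rho>t) * (\<rho> * \<Lambda>\<^sup>2 + \<alpha> * (1 - \<rho>) *
        (mp_tail \<gamma> (\<Lambda>\<^sup>2) 1 - 2 * \<Lambda> * mp_tail \<gamma> (\<Lambda>\<^sup>2) (1/2)
         + \<Lambda>\<^sup>2 * mp_tail \<gamma> (\<Lambda>\<^sup>2) 0)))"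

end

theory Submission
  imports Defs
begin

text \<open>For \<open>\<Lambda> \<ge> 0\<close> the bracket multiplying \<open>\<alpha>(1-\<rho>)\<close> in \<open>M\<close> equals
  \<open>\<integral> ((\<surd>t - \<Lambda>)\<^sub>+)\<^sup>2 p\<^sub>\<gamma>(t) dt\<close>, an average of convex functions of \<open>\<Lambda>\<close> that is moreover
  Lipschitz in \<open>\<Lambda>\<close>. Hence \<open>M\<close> is a positive constant times \<open>\<rho>\<Lambda>\<^sup>2\<close> plus a continuous convex
  function; it is therefore convex, strictly so at midpoints, and attains its minimum on the
  compact interval \<open>[0, \<gamma>\<^sub>+]\<close> at exactly one point.\<close>

lemma ex1_minimizer_if_midpoint_strictly_convex:
  fixes F :: "'a::real_normed_vector \<Rightarrow> real"
  assumes "compact S" "S \<noteq> {}" "convex S" "continuous_on S F"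
    and midpoint_less: "\<And>x y. x \<in> S \<Longrightarrow> y \<in> S \<Longrightarrow> x \<noteq> y \<Longrightarrow> F (midpoint x y) < (F x + F y) / 2"
  shows "\<exists>!x. x \<in> S \<and> (\<forall>y\<in>S. F x \<le> F y)"
proof -
  obtain m where m: "m \<in> S" "\<forall>y\<in>S. F m \<le> F y"
    using continuous_attains_inf[OF assms(1-2,4)] by blast
  have "z = m" if z: "z \<in> S" "\<forall>y\<in>S. F z \<le> F y" for z
  proof (rule ccontr)
    assume "z \<noteq> m"
    then have "F (midpoint z m) < (F z + F m) / 2"
      using midpoint_less z m by blast
    moreover have "midpoint z m \<in> S"
      using \<open>convex S\<close> z(1) m(1) by (simp add: midpoint_def convexD scaleR_right_distrib)
    ultimately show False
      using z m by fastforce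
  qed
  with m show ?thesis by blast
qed

lemma midpoint_less_add_power2:
  fixes f :: "real \<Rightarrow> real"
  assumes "convex_on S f" "0 < c" "x \<in> S" "y \<in> S" "x \<noteq> y"
  shows "c * (midpoint x y)\<^sup>2 + f (midpoint x y) < ((c * x\<^sup>2 + f x) + (c * y\<^sup>2 + f y)) / 2"
proof -
  have "midpoint x y = (1 - 1/2) *\<^sub>R x + (1/2) *\<^sub>R y"
    by (simp add: midpoint_def field_simps)
  then have "f (midpoint x y) \<le> (f x + f y) / 2"
    using convex_onD[OF assms(1), of "1/2" x y] assms(3,4) by simp
  moreover have "(c * x\<^sup>2 + c * y\<^sup>2) / 2 - c * (midpoint x y)\<^sup>2 = c * ((x - y) / 2)\<^sup>2"
    by (simp add: midpoint_def power2_eq_square field_simps)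
  moreover have "0 < c * ((x - y) / 2)\<^sup>2"
    using assms(2,5) by simp
  ultimately show ?thesis
    by (simp add: field_simps)
qed

lemma convex_ex1_minimizer_add_power2:
  fixes f :: "real \<Rightarrow> real"
  assumes "convex_on S f" "continuous_on S f" "0 < c" "compact S" "S \<noteq> {}"
  shows "convex_on S (\<lambda>x. c * x\<^sup>2 + f x) \<and> (\<exists>!x. x \<in> S \<and> (\<forall>y\<in>S. c * x\<^sup>2 + f x \<le> c * y\<^sup>2 + f y))"
proof
  have "convex S"
    using convex_on_imp_convex[OF assms(1)] .
  then show "convex_on S (\<lambda>x. c * x\<^sup>2 + f x)"
    using assms(1,3) convex_on_subset[OF convex_power2] by (intro convex_on_add convex_on_cmul) auto
  show "\<exists>!x. x \<in> S \<and> (\<forall>y\<in>S. c * x\<^sup>2 + f x \<le> c * y\<^sup>2 + f y)"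
    using midpoint_less_add_power2[OF assms(1,3)] assms(2,4,5) \<open>convex S\<close>
    by (intro ex1_minimizer_if_midpoint_strictly_convex continuous_intros) auto
qed

lemma convex_on_cong:
  assumes "\<And>x. x \<in> S \<Longrightarrow> f x = g x"
  shows "convex_on S f \<longleftrightarrow> convex_on S g"
  using assms by (auto simp: convex_on_def convexD)

lemma convex_on_lebesgue_integral:
  fixes f :: "'a::real_vector \<Rightarrow> 'b \<Rightarrow> real"
  assumes "convex S" and integrable: "\<And>x. x \<in> S \<Longrightarrow> integrable M (f x)"
    and convex: "\<And>t. convex_on S (\<lambda>x. f x t)"
  shows "convex_on S (\<lambda>x. \<integral>t. f x t \<partial>M)"
proof (rule convex_onI[OF _ \<open>convex S\<close>])
  fix u :: real and x y assume u: "0 < u" "u < 1" and xy: "x \<in> S" "y \<in> S"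
  have "(\<integral>t. f ((1 - u) *\<^sub>R x + u *\<^sub>R y) t \<partial>M) \<le> (\<integral>t. (1 - u) * f x t + u * f y t \<partial>M)"
  proof (rule integral_mono)
    show "integrable M (f ((1 - u) *\<^sub>R x + u *\<^sub>R y))"
      using integrable \<open>convex S\<close> xy u by (simp add: convexD)
    show "integrable M (\<lambda>t. (1 - u) * f x t + u * f y t)"
      using integrable xy by simp
    show "f ((1 - u) *\<^sub>R x + u *\<^sub>R y) t \<le> (1 - u) * f x t + u * f y t" for t
      using convex_onD[OF convex] xy u by simp
  qed
  also have "\<dots> = (1 - u) * (\<integral>t. f x t \<partial>M) + u * (\<integral>t. f y t \<partial>M)"
    using integrable xy by simp
  finally show "(\<integral>t. f ((1 - u) *\<^sub>R x + u *\<^sub>R y) t \<partial>M)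
      \<le> (1 - u) * (\<integral>t. f x t \<partial>M) + u * (\<integral>t. f y t \<partial>M)" .
qed

lemma lipschitz_on_lebesgue_integral:
  fixes f :: "real \<Rightarrow> 'b \<Rightarrow> real"
  assumes integrable: "\<And>x. x \<in> S \<Longrightarrow> integrable M (f x)" and "integrable M K"
    and "\<And>t. 0 \<le> K t"
    and lipschitz: "\<And>x y t. x \<in> S \<Longrightarrow> y \<in> S \<Longrightarrow> \<bar>f x t - f y t\<bar> \<le> K t * \<bar>x - y\<bar>"
  shows "(\<integral>t. K t \<partial>M)-lipschitz_on S (\<lambda>x. \<integral>t. f x t \<partial>M)"
proof (rule lipschitz_onI)
  fix x y assume xy: "x \<in> S" "y \<in> S"
  have "\<bar>(\<integral>t. f x t \<partial>M) - (\<integral>t. f y t \<partial>M)\<bar> = \<bar>\<integral>t. f x t - f y t \<partial>M\<bar>"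
    using integrable xy by simp
  also have "\<dots> \<le> (\<integral>t. \<bar>f x t - f y t\<bar> \<partial>M)"
    by (rule integral_abs_bound)
  also have "\<dots> \<le> (\<integral>t. K t * \<bar>x - y\<bar> \<partial>M)"
    using integrable xy lipschitz \<open>integrable M K\<close> by (intro integral_mono) auto
  finally show "dist (\<integral>t. f x t \<partial>M) (\<integral>t. f y t \<partial>M) \<le> (\<integral>t. K t \<partial>M) * dist x y"
    by (simp add: dist_real_def)
qed (use assms(3) in \<open>simp add: integral_nonneg_AE\<close>)

lemma gamma_minus_nonneg: "0 \<le> gamma_minus \<gamma>"
  by (simp add: gamma_minus_def)

lemma gamma_plus_nonneg: "0 \<le> gamma_plus \<gamma>"
  by (simp add: gamma_plus_def)

lemma mp_density_nonneg: "0 < \<gamma> \<Longrightarrow> 0 \<le> mp_density \<gamma> t"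
  using gamma_minus_nonneg[of \<gamma>] by (auto simp: mp_density_def)

lemma mp_density_eq_0: "t \<notin> {0..gamma_plus \<gamma>} \<Longrightarrow> mp_density \<gamma> t = 0"
  using gamma_minus_nonneg[of \<gamma>] by (auto simp: mp_density_def)

lemma borel_measurable_mp_density [measurable]: "mp_density \<gamma> \<in> borel_measurable lborel"
  unfolding mp_density_def by measurable

text \<open>The density has an integrable singularity at most of order \<open>t\<^sup>-\<^sup>1\<^sup>/\<^sup>2\<close> at the origin
  (relevant when \<open>\<gamma> = 1\<close>, where \<open>\<gamma>\<^sub>- = 0\<close>).\<close>

lemma mp_density_le:
  assumes "0 < \<gamma>" "0 < t"
  shows "mp_density \<gamma> t \<le> sqrt (gamma_plus \<gamma>) / (2 * pi * \<gamma>) * t powr (-1/2)"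
proof (cases "gamma_minus \<gamma> \<le> t \<and> t \<le> gamma_plus \<gamma>")
  case True
  have "(gamma_plus \<gamma> - t) * (t - gamma_minus \<gamma>) \<le> gamma_plus \<gamma> * t"
    using True gamma_minus_nonneg[of \<gamma>] \<open>0 < t\<close> by (intro mult_mono) auto
  then have "mp_density \<gamma> t \<le> sqrt (gamma_plus \<gamma> * t) / (2 * pi * \<gamma> * t)"
    using True assms unfolding mp_density_def by (auto intro!: divide_right_mono)
  also have "\<dots> = sqrt (gamma_plus \<gamma>) / (2 * pi * \<gamma>) * t powr (-1/2)"
    using assms by (simp add: real_sqrt_mult powr_minus powr_half_sqrt field_simps)
  finally show ?thesis .
next
  case False
  then have "mp_density \<gamma> t = 0"
    unfolding mp_density_def by (rule if_not_P)
  with assms show ?thesis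
    by (simp add: gamma_plus_def)
qed

lemma integrable_mp_density:
  assumes "0 < \<gamma>"
  shows "integrable lborel (mp_density \<gamma>)"
proof -
  define C where "C = sqrt (gamma_plus \<gamma>) / (2 * pi * \<gamma>)"
  have "(\<lambda>t. t powr (-1/2)) integrable_on {0..gamma_plus \<gamma>}"
    using gamma_plus_nonneg by (intro integrable_on_powr_from_0) auto
  then have "(\<lambda>t. t powr (-1/2)) absolutely_integrable_on {0..gamma_plus \<gamma>}"
    by (subst absolutely_integrable_on_iff_nonneg) auto
  from integrable_mult_right[OF this[unfolded set_integrable_def], of C]
  have majorant: "integrable lborel (\<lambda>t. indicator {0..gamma_plus \<gamma>} t *\<^sub>R (C * t powr (-1/2)))"
    by (subst (asm) integrable_completion) (auto simp: mult_ac)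
  show ?thesis
  proof (rule Bochner_Integration.integrable_bound[OF majorant _ AE_I2])
    fix t :: real
    have "0 \<le> C"
      using assms gamma_plus_nonneg[of \<gamma>] by (simp add: C_def)
    then show "norm (mp_density \<gamma> t) \<le> norm (indicator {0..gamma_plus \<gamma>} t *\<^sub>R (C * t powr (-1/2)))"
      using assms mp_density_le[OF assms, of t] mp_density_nonneg[OF assms, of t] mp_density_eq_0[of t \<gamma>]
      by (cases "t \<in> {0..gamma_plus \<gamma>} \<and> t \<noteq> 0") (auto simp: C_def mp_density_def)
  qed simp
qed

lemma integrable_mult_mp_density:
  assumes "0 < \<gamma>" "f \<in> borel_measurable lborel"
    and bounded: "\<And>t. t \<in> {0..gamma_plus \<gamma>} \<Longrightarrow> \<bar>f t\<bar> \<le> B"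
  shows "integrable lborel (\<lambda>t. f t * mp_density \<gamma> t)"
proof (rule Bochner_Integration.integrable_bound[OF _ _ AE_I2])
  show "integrable lborel (\<lambda>t. B * mp_density \<gamma> t)"
    using integrable_mp_density[OF assms(1)] by simp
  fix t :: real
  show "norm (f t * mp_density \<gamma> t) \<le> norm (B * mp_density \<gamma> t)"
  proof (cases "t \<in> {0..gamma_plus \<gamma>}")
    case True
    then have "\<bar>f t\<bar> * mp_density \<gamma> t \<le> B * mp_density \<gamma> t" "0 \<le> B"
      using bounded[of t] mp_density_nonneg[OF assms(1)] by (auto intro: mult_right_mono)
    then show ?thesis
      using mp_density_nonneg[OF assms(1), of t] by (simp add: abs_mult)
  qed (simp add: mp_density_eq_0)
qed (use assms(2) in measurable)

definition sqrt_excess_sq :: "real \<Rightarrow> real \<Rightarrow> real" where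
  "sqrt_excess_sq L t = (max 0 (sqrt t - L))\<^sup>2"

lemma borel_measurable_sqrt_excess_sq [measurable]: "sqrt_excess_sq L \<in> borel_measurable lborel"
  unfolding sqrt_excess_sq_def by measurable

lemma convex_on_sqrt_excess_sq: "convex_on UNIV (\<lambda>L. sqrt_excess_sq L t)"
proof (rule convex_onI)
  fix u a b :: real assume u: "0 < u" "u < 1"
  define X where "X = (1 - u) * max 0 (sqrt t - a) + u * max 0 (sqrt t - b)"
  have "sqrt t - ((1 - u) * a + u * b) = (1 - u) * (sqrt t - a) + u * (sqrt t - b)"
    by (simp add: algebra_simps)
  also have "\<dots> \<le> X"
    unfolding X_def using u by (intro add_mono mult_left_mono) auto
  finally have "sqrt_excess_sq ((1 - u) * a + u * b) t \<le> X\<^sup>2"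
    unfolding sqrt_excess_sq_def X_def using u by (intro power_mono) auto
  also have "\<dots> \<le> (1 - u) * sqrt_excess_sq a t + u * sqrt_excess_sq b t"
    unfolding X_def sqrt_excess_sq_def using u convex_onD[OF convex_power2]
    by (simp add: convex_on_def)
  finally show "sqrt_excess_sq ((1 - u) *\<^sub>R a + u *\<^sub>R b) t
      \<le> (1 - u) * sqrt_excess_sq a t + u * sqrt_excess_sq b t" by simp
qed simp

lemma sqrt_excess_sq_lipschitz:
  assumes "0 \<le> a" "0 \<le> b" "0 \<le> t"
  shows "\<bar>sqrt_excess_sq a t - sqrt_excess_sq b t\<bar> \<le> 2 * sqrt t * \<bar>a - b\<bar>"
proof -
  define p q where "p = max 0 (sqrt t - a)" and "q = max 0 (sqrt t - b)"
  have pq: "0 \<le> p" "p \<le> sqrt t" "0 \<le> q" "q \<le> sqrt t" "\<bar>p - q\<bar> \<le> \<bar>a - b\<bar>"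
    using assms unfolding p_def q_def by (auto simp: abs_if max_def)
  have "sqrt_excess_sq a t - sqrt_excess_sq b t = (p - q) * (p + q)"
    by (simp add: sqrt_excess_sq_def p_def q_def power2_eq_square algebra_simps)
  then have "\<bar>sqrt_excess_sq a t - sqrt_excess_sq b t\<bar> = \<bar>p - q\<bar> * (p + q)"
    using pq by (simp add: abs_mult)
  also have "\<dots> \<le> \<bar>a - b\<bar> * (2 * sqrt t)"
    using pq by (intro mult_mono) auto
  finally show ?thesis by (simp add: algebra_simps)
qed

lemma sqrt_excess_sq_eq:
  assumes "0 \<le> L" "0 < t"
  shows "sqrt_excess_sq L t = (if L\<^sup>2 \<le> t then t - 2 * L * sqrt t + L\<^sup>2 else 0)"
proof (cases "L\<^sup>2 \<le> t")
  case True
  then have "L \<le> sqrt t"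
    using assms(1) real_le_rsqrt by blast
  with True assms show ?thesis
    by (simp add: sqrt_excess_sq_def power2_eq_square algebra_simps)
next
  case False
  then have "sqrt t < L"
    using assms real_less_lsqrt by fastforce
  with False show ?thesis
    by (simp add: sqrt_excess_sq_def)
qed

lemma mp_tail_eq_integral:
  "mp_tail \<gamma> x k = (\<integral>t. indicator {x..gamma_plus \<gamma>} t * t powr k * mp_density \<gamma> t \<partial>lborel)"
  unfolding mp_tail_def set_lebesgue_integral_def by (simp add: mult.assoc)

lemma integrable_mp_tail:
  assumes "0 < \<gamma>" "k \<in> {0, 1/2, 1}"
  shows "integrable lborel (\<lambda>t. indicator {x..gamma_plus \<gamma>} t * t powr k * mp_density \<gamma> t)"
proof (rule integrable_mult_mp_density[OF assms(1), where B = "1 + gamma_plus \<gamma>"])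
  fix t assume t: "t \<in> {0..gamma_plus \<gamma>}"
  then have "0 \<le> t" "t \<le> gamma_plus \<gamma>"
    by auto
  have "0 \<le> (sqrt t - 1)\<^sup>2"
    by simp
  then have "sqrt t \<le> 1 + t"
    using \<open>0 \<le> t\<close> by (simp add: power2_eq_square algebra_simps)
  from assms(2) consider "k = 0" | "k = 1/2" | "k = 1"
    by blast
  then have "\<bar>t powr k\<bar> \<le> 1 + gamma_plus \<gamma>"
  proof cases
    case 2
    show ?thesis
      using \<open>sqrt t \<le> 1 + t\<close> \<open>0 \<le> t\<close> \<open>t \<le> gamma_plus \<gamma>\<close> by (simp add: 2 powr_half_sqrt)
  qed (use \<open>0 \<le> t\<close> \<open>t \<le> gamma_plus \<gamma>\<close> in auto)
  then show "\<bar>indicator {x..gamma_plus \<gamma>} t * t powr k\<bar> \<le> 1 + gamma_plus \<gamma>"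
    using \<open>0 \<le> t\<close> \<open>t \<le> gamma_plus \<gamma>\<close> by (simp add: indicator_def)
qed measurable

lemma integrable_sqrt_excess_sq:
  assumes "0 < \<gamma>" "0 \<le> L"
  shows "integrable lborel (\<lambda>t. sqrt_excess_sq L t * mp_density \<gamma> t)"
proof (rule integrable_mult_mp_density[OF assms(1), where B = "gamma_plus \<gamma>"])
  fix t assume t: "t \<in> {0..gamma_plus \<gamma>}"
  have "sqrt_excess_sq L t \<le> (sqrt t)\<^sup>2"
    unfolding sqrt_excess_sq_def using assms(2) t by (intro power_mono) auto
  then show "\<bar>sqrt_excess_sq L t\<bar> \<le> gamma_plus \<gamma>"
    using t by (simp add: sqrt_excess_sq_def)
qed measurable

lemma mp_tail_combination_eq_integral:
  assumes "0 < \<gamma>" "0 \<le> L"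
  shows "mp_tail \<gamma> (L\<^sup>2) 1 - 2 * L * mp_tail \<gamma> (L\<^sup>2) (1/2) + L\<^sup>2 * mp_tail \<gamma> (L\<^sup>2) 0
       = (\<integral>t. sqrt_excess_sq L t * mp_density \<gamma> t \<partial>lborel)"
proof -
  let ?f = "\<lambda>k t. indicator {L\<^sup>2..gamma_plus \<gamma>} t * t powr k * mp_density \<gamma> t"
  have "mp_tail \<gamma> (L\<^sup>2) 1 - 2 * L * mp_tail \<gamma> (L\<^sup>2) (1/2) + L\<^sup>2 * mp_tail \<gamma> (L\<^sup>2) 0
      = (\<integral>t. ?f 1 t - 2 * L * ?f (1/2) t + L\<^sup>2 * ?f 0 t \<partial>lborel)"
    unfolding mp_tail_eq_integral
    using integrable_mp_tail[OF assms(1), of 0 "L\<^sup>2"] integrable_mp_tail[OF assms(1), of "1/2" "L\<^sup>2"]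
      integrable_mp_tail[OF assms(1), of 1 "L\<^sup>2"]
    by simp
  also have "\<dots> = (\<integral>t. sqrt_excess_sq L t * mp_density \<gamma> t \<partial>lborel)"
  proof (rule Bochner_Integration.integral_cong[OF refl])
    fix t :: real
    show "?f 1 t - 2 * L * ?f (1/2) t + L\<^sup>2 * ?f 0 t = sqrt_excess_sq L t * mp_density \<gamma> t"
    proof (cases "0 < t \<and> t \<le> gamma_plus \<gamma>")
      case True
      then show ?thesis
        using assms(2) by (simp add: sqrt_excess_sq_eq indicator_def powr_half_sqrt algebra_simps)
    next
      case False
      then have "mp_density \<gamma> t = 0"
        using mp_density_eq_0[of t \<gamma>] by (cases "t = 0") (auto simp: mp_density_def)
      then show ?thesis by simp
    qed
  qed
  finally show ?thesis .
qed

lemma convex_on_mp_excess_integral: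
  assumes "0 < \<gamma>"
  shows "convex_on {0..} (\<lambda>L. \<integral>t. sqrt_excess_sq L t * mp_density \<gamma> t \<partial>lborel)"
proof (rule convex_on_lebesgue_integral)
  show "convex_on {0..} (\<lambda>L. sqrt_excess_sq L t * mp_density \<gamma> t)" for t
    using convex_on_cmul[OF mp_density_nonneg[OF assms] convex_on_subset[OF convex_on_sqrt_excess_sq]]
    by (simp add: mult.commute)
qed (use integrable_sqrt_excess_sq[OF assms] in auto)

lemma continuous_on_mp_excess_integral:
  assumes "0 < \<gamma>"
  shows "continuous_on {0..} (\<lambda>L. \<integral>t. sqrt_excess_sq L t * mp_density \<gamma> t \<partial>lborel)"
proof (rule lipschitz_on_continuous_on[OF lipschitz_on_lebesgue_integral])
  show "integrable lborel (\<lambda>t. 2 * sqrt t * mp_density \<gamma> t)"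
    using gamma_plus_nonneg[of \<gamma>]
    by (intro integrable_mult_mp_density[OF assms, where B = "2 * sqrt (gamma_plus \<gamma>)"]) auto
  show "0 \<le> 2 * sqrt t * mp_density \<gamma> t" for t
    using mp_density_nonneg[OF assms, of t] mp_density_eq_0[of t \<gamma>] by (cases "0 \<le> t") auto
  show "\<bar>sqrt_excess_sq L t * mp_density \<gamma> t - sqrt_excess_sq L' t * mp_density \<gamma> t\<bar>
      \<le> 2 * sqrt t * mp_density \<gamma> t * \<bar>L - L'\<bar>" if "L \<in> {0..}" "L' \<in> {0..}" for L L' t
  proof (cases "0 \<le> t")
    case True
    have "\<bar>sqrt_excess_sq L t * mp_density \<gamma> t - sqrt_excess_sq L' t * mp_density \<gamma> t\<bar>
        = \<bar>sqrt_excess_sq L t - sqrt_excess_sq L' t\<bar> * mp_density \<gamma> t"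
      using mp_density_nonneg[OF assms, of t] by (simp add: abs_mult flip: left_diff_distrib)
    also have "\<dots> \<le> 2 * sqrt t * \<bar>L - L'\<bar> * mp_density \<gamma> t"
      using sqrt_excess_sq_lipschitz[of L L' t] that True mp_density_nonneg[OF assms, of t]
      by (intro mult_right_mono) auto
    finally show ?thesis
      by (simp add: mult_ac)
  qed (simp add: mp_density_eq_0)
qed (use integrable_sqrt_excess_sq[OF assms] in auto)

lemma mp_gamma_pos:
  assumes "0 < \<rho>" "\<rho> < 1" "0 < \<rho>t" "\<rho>t < 1"
  shows "0 < mp_gamma \<rho> \<rho>t"
proof -
  have "0 < (\<rho>t * (1 - \<rho>)) / (\<rho> * (1 - \<rho>t))"
    using assms by simp
  then show ?thesis
    by (simp add: mp_gamma_def algebra_simps)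
qed

lemma MM_eq_excess_integral:
  assumes "0 \<le> \<Lambda>" "0 < mp_gamma \<rho> \<rho>t"
  shows "MM \<Lambda> \<rho> \<rho>t \<alpha> = \<rho> + \<rho>t - \<rho> * \<rho>t + ((1 - \<rho>t) * \<rho>) * \<Lambda>\<^sup>2 + ((1 - \<rho>t) * \<alpha> * (1 - \<rho>)) *
      (\<integral>t. sqrt_excess_sq \<Lambda> t * mp_density (mp_gamma \<rho> \<rho>t) t \<partial>lborel)"
  unfolding MM_def Let_def mp_tail_combination_eq_integral[OF assms(2,1)]
  by (simp add: algebra_simps)

lemma MM_eq_power2_add_convex:
  assumes "0 < \<rho>" "\<rho> < 1" "0 < \<rho>t" "\<rho>t < 1" "0 \<le> \<alpha>"
  obtains c f where "0 < c" "convex_on {0..} f" "continuous_on {0..} f"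
    "\<And>\<Lambda>. 0 \<le> \<Lambda> \<Longrightarrow> MM \<Lambda> \<rho> \<rho>t \<alpha> = c * \<Lambda>\<^sup>2 + f \<Lambda>"
proof
  let ?\<gamma> = "mp_gamma \<rho> \<rho>t"
  let ?J = "\<lambda>\<Lambda>. \<integral>t. sqrt_excess_sq \<Lambda> t * mp_density ?\<gamma> t \<partial>lborel"
  have \<gamma>: "0 < ?\<gamma>"
    using mp_gamma_pos assms by blast
  have "0 \<le> (1 - \<rho>t) * \<alpha> * (1 - \<rho>)"
    using assms by simp
  then show "convex_on {0..} (\<lambda>\<Lambda>. \<rho> + \<rho>t - \<rho> * \<rho>t + ((1 - \<rho>t) * \<alpha> * (1 - \<rho>)) * ?J \<Lambda>)"
    using convex_on_mp_excess_integral[OF \<gamma>]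
    by (intro convex_on_add convex_on_cmul) (auto simp: convex_on_const)
  show "continuous_on {0..} (\<lambda>\<Lambda>. \<rho> + \<rho>t - \<rho> * \<rho>t + ((1 - \<rho>t) * \<alpha> * (1 - \<rho>)) * ?J \<Lambda>)"
    using continuous_on_mp_excess_integral[OF \<gamma>] by (intro continuous_intros)
  show "0 < (1 - \<rho>t) * \<rho>"
    using assms by simp
  show "MM \<Lambda> \<rho> \<rho>t \<alpha> = (1 - \<rho>t) * \<rho> * \<Lambda>\<^sup>2 + (\<rho> + \<rho>t - \<rho> * \<rho>t + ((1 - \<rho>t) * \<alpha> * (1 - \<rho>)) * ?J \<Lambda>)"
    if "0 \<le> \<Lambda>" for \<Lambda>
    using MM_eq_excess_integral[OF that \<gamma>] by simp
qed

theorem lemma9: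
  fixes \<alpha> \<beta> \<rho> :: real
  assumes "\<alpha> \<in> {1/2, 1}" and "0 < \<beta>" and "\<beta> \<le> 1" and "0 < \<rho>" and "\<rho> < 1"
  shows "convex_on {0..gamma_plus (mp_gamma \<rho> (\<beta> * \<rho>))} (\<lambda>\<Lambda>. MM \<Lambda> \<rho> (\<beta> * \<rho>) \<alpha>)
       \<and> (\<exists>!\<Lambda>. \<Lambda> \<in> {0..gamma_plus (mp_gamma \<rho> (\<beta> * \<rho>))} \<and>
            (\<forall>\<Lambda>'\<in>{0..gamma_plus (mp_gamma \<rho> (\<beta> * \<rho>))}.
               MM \<Lambda> \<rho> (\<beta> * \<rho>) \<alpha> \<le> MM \<Lambda>' \<rho> (\<beta> * \<rho>) \<alpha>))"
proof -
  let ?S = "{0..gamma_plus (mp_gamma \<rho> (\<beta> * \<rho>))}"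
  have "\<beta> * \<rho> \<le> \<rho>"
    using assms by (intro mult_left_le_one_le) auto
  then have "0 < \<beta> * \<rho>" "\<beta> * \<rho> < 1"
    using assms by (simp, linarith)
  moreover have "0 \<le> \<alpha>"
    using assms(1) by auto
  ultimately obtain c f where "0 < c" "convex_on {0..} f" "continuous_on {0..} f"
    and MM_eq: "\<And>\<Lambda>. 0 \<le> \<Lambda> \<Longrightarrow> MM \<Lambda> \<rho> (\<beta> * \<rho>) \<alpha> = c * \<Lambda>\<^sup>2 + f \<Lambda>"
    using MM_eq_power2_add_convex assms(4,5) by metis
  have "?S \<subseteq> {0..}" "?S \<noteq> {}"
    using gamma_plus_nonneg by auto
  then have "convex_on ?S (\<lambda>\<Lambda>. c * \<Lambda>\<^sup>2 + f \<Lambda>)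
      \<and> (\<exists>!\<Lambda>. \<Lambda> \<in> ?S \<and> (\<forall>\<Lambda>'\<in>?S. c * \<Lambda>\<^sup>2 + f \<Lambda> \<le> c * \<Lambda>'\<^sup>2 + f \<Lambda>'))"
    using convex_on_subset[OF \<open>convex_on {0..} f\<close>] continuous_on_subset[OF \<open>continuous_on {0..} f\<close>]
    by (intro convex_ex1_minimizer_add_power2 \<open>0 < c\<close>) auto
  moreover have "\<Lambda> \<in> ?S \<and> (\<forall>\<Lambda>'\<in>?S. MM \<Lambda> \<rho> (\<beta> * \<rho>) \<alpha> \<le> MM \<Lambda>' \<rho> (\<beta> * \<rho>) \<alpha>)
      \<longleftrightarrow> \<Lambda> \<in> ?S \<and> (\<forall>\<Lambda>'\<in>?S. c * \<Lambda>\<^sup>2 + f \<Lambda> \<le> c * \<Lambda>'\<^sup>2 + f \<Lambda>')" for \<Lambda>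
    using MM_eq by auto
  ultimately show ?thesis
    using convex_on_cong[of ?S, OF MM_eq] by auto
qed

end
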